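(* For every $r\in[0,1]$, the density of $1$'s in $b(r)$ exists and equals $r$, i.e. $\lim_{n\to\infty}|\{m<n:b(r)(m)=1\}|/n=r$.
   Context: For $X,Y\in2^\omega$, $(X\oplus Y)(2n)=X(n)$, $(X\oplus Y)(2n+1)=Y(n)$. The map $b:[0,1]\to2^\omega$ is defined recursively by $b(0)=0^\omega$, $b(1)=1^\omega$, $b(r)=0^\omega\oplus b(2r)$ for $0<r\le1/2$, and $b(r)=b(2r-1)\oplus1^\omega$ for $1/2\le r<1$. *)

theory Defs
  imports Complex_Main
begin

text \<open>Elements of 2^omega are represented as nat => bool (True = 1, False = 0).\<close>

definition join :: "(nat \<Rightarrow> bool) \<Rightarrow> (nat \<Rightarrow> bool) \<Rightarrow> (nat \<Rightarrow> bool)" where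
  "join X Y n = (if even n then X (n div 2) else Y (n div 2))"

definition b_spec :: "(real \<Rightarrow> nat \<Rightarrow> bool) \<Rightarrow> bool" where
  "b_spec f \<longleftrightarrow>
     f 0 = (\<lambda>_. False) \<and> f 1 = (\<lambda>_. True) \<and>
     (\<forall>r. 0 < r \<and> r \<le> 1/2 \<longrightarrow> f r = join (\<lambda>_. False) (f (2*r))) \<and>
     (\<forall>r. 1/2 \<le> r \<and> r < 1 \<longrightarrow> f r = join (f (2*r - 1)) (\<lambda>_. True))"

definition b :: "real \<Rightarrow> nat \<Rightarrow> bool" where
  "b r = (THE X. \<exists>f. b_spec f \<and> f r = X)"

end

theory Submission
  imports Defs "HOL-Real_Asymp.Real_Asymp"
begin

text \<open>
  Splitting off the even and the odd positions of \<open>b r\<close> reduces the first \<open>2k\<close> digits of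
  \<open>b r\<close> to the first \<open>k\<close> digits of \<open>b s\<close> with \<open>s = 2r\<close> or \<open>s = 2r - 1\<close>, and the discrepancy
  \<open>#{m < n. b r m} - r n\<close> is the same for both.  An odd length adds one digit, hence at
  most \<open>1\<close> to the discrepancy, so induction on \<open>n\<close> bounds it by \<open>2 \<surd>n\<close>, which is \<open>o(n)\<close>.
\<close>

function b_rec :: "real \<Rightarrow> nat \<Rightarrow> bool" where
  "b_rec r n =
     (if r = 0 then False else if r = 1 then True else if n = 0 then False
      else if r \<le> 1/2 then (if even n then False else b_rec (2*r) (n div 2))
      else (if even n then b_rec (2*r - 1) (n div 2) else True))"
  by auto
termination by (relation "measure snd") auto

declare b_rec.simps [simp del]

lemma b_rec_0 [simp]: "b_rec 0 n = False"
  by (subst b_rec.simps) simp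

lemma b_rec_1 [simp]: "b_rec 1 n = True"
  by (subst b_rec.simps) simp

lemma b_rec_first_digit: "b_rec r 0 = (r = 1)"
  by (subst b_rec.simps) simp

lemma b_spec_b_rec: "b_spec b_rec"
  unfolding b_spec_def
proof (intro conjI allI impI ext)
  fix r :: real and n :: nat
  assume "0 < r \<and> r \<le> 1/2"
  then show "b_rec r n = join (\<lambda>_. False) (b_rec (2*r)) n"
    by (subst b_rec.simps) (auto simp: join_def)
next
  fix r :: real and n :: nat
  assume r: "1/2 \<le> r \<and> r < 1"
  show "b_rec r n = join (b_rec (2*r - 1)) (\<lambda>_. True) n"
  proof (cases "r = 1/2")
    case True
    then show ?thesis unfolding True by (subst b_rec.simps) (simp add: join_def)
  next
    case False
    with r show ?thesis by (subst b_rec.simps) (auto simp: join_def b_rec_first_digit)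
  qed
qed auto

lemma b_specD:
  assumes "b_spec f"
  shows "f 0 = (\<lambda>_. False)" and "f 1 = (\<lambda>_. True)"
    and "0 < r \<Longrightarrow> r \<le> 1/2 \<Longrightarrow> f r = join (\<lambda>_. False) (f (2*r))"
    and "1/2 \<le> r \<Longrightarrow> r < 1 \<Longrightarrow> f r = join (f (2*r - 1)) (\<lambda>_. True)"
  using assms unfolding b_spec_def by blast+

text \<open>The digit at position 0 is not determined by a descent on the position: for \<open>r > 1/2\<close> it
  is inherited from \<open>2r - 1\<close>, and \<open>r \<mapsto> 2r - 1\<close> reaches \<open>[0, 1/2]\<close> after \<open>k\<close> steps once
  \<open>r \<le> 1 - 1/2^k\<close>.\<close>

lemma b_spec_first_digit_below:
  assumes f: "b_spec f"
  shows "0 \<le> r \<Longrightarrow> r \<le> 1 - 1/2^k \<Longrightarrow> \<not> f r 0"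
proof (induction k arbitrary: r)
  case 0
  with f show ?case by (simp add: b_specD)
next
  case (Suc k)
  consider "r = 0" | "0 < r" "r \<le> 1/2" | "1/2 < r"
    using Suc.prems by linarith
  then show ?case
  proof cases
    case 3
    have "(0::real) < 1/2^Suc k" by simp
    with Suc.prems have "r < 1" by linarith
    with 3 f have "f r 0 = f (2*r - 1) 0" by (simp add: b_specD join_def)
    moreover have "\<not> f (2*r - 1) 0"
      using 3 Suc.prems by (intro Suc.IH) (auto simp: field_simps)
    ultimately show ?thesis by simp
  qed (use f in \<open>auto simp: b_specD join_def\<close>)
qed

lemma b_spec_first_digit:
  assumes "b_spec f" "0 \<le> r" "r < 1"
  shows "\<not> f r 0"
proof -
  obtain k where "(1/2::real)^k < 1 - r"
    using real_arch_pow_inv[of "1 - r" "1/2"] assms by auto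
  with assms show ?thesis
    by (intro b_spec_first_digit_below[where k = k]) (auto simp: power_divide)
qed

lemma b_spec_unique:
  assumes f: "b_spec f" and g: "b_spec g"
  shows "0 \<le> r \<Longrightarrow> r \<le> 1 \<Longrightarrow> f r n = g r n"
proof (induction n arbitrary: r rule: less_induct)
  case (less n)
  consider "r = 0 \<or> r = 1" | "0 < r" "r < 1" "n = 0" | "0 < r" "r \<le> 1/2" "n \<noteq> 0"
    | "1/2 < r" "r < 1" "n \<noteq> 0"
    using less.prems by linarith
  then show ?case
  proof cases
    case 1
    with f g show ?thesis by (auto simp: b_specD)
  next
    case 2
    with f g show ?thesis by (simp add: b_spec_first_digit)
  next
    case 3
    with f g show ?thesis by (simp add: b_specD join_def less.IH)
  next
    case 4
    with f g show ?thesis by (simp add: b_specD join_def less.IH)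
  qed
qed

lemma b_eq_b_rec: "0 \<le> r \<Longrightarrow> r \<le> 1 \<Longrightarrow> b r = b_rec r"
  unfolding b_def
proof (rule the_equality)
  show "\<exists>f. b_spec f \<and> f r = b_rec r"
    using b_spec_b_rec by blast
qed (use b_spec_unique[OF _ b_spec_b_rec] in blast)

definition ones :: "(nat \<Rightarrow> bool) \<Rightarrow> nat \<Rightarrow> nat" where
  "ones X n = card {m. m < n \<and> X m}"

lemma ones_0 [simp]: "ones X 0 = 0"
  by (simp add: ones_def)

lemma ones_Suc [simp]: "ones X (Suc n) = ones X n + of_bool (X n)"
proof -
  have "{m. m < Suc n \<and> X m} = (if X n then insert n else id) {m. m < n \<and> X m}"
    by (auto simp: less_Suc_eq)
  then show ?thesis by (simp add: ones_def)
qed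

lemma ones_const: "ones (\<lambda>_. c) n = (if c then n else 0)"
  by (induction n) auto

lemma ones_join: "ones (join X Y) (2*k) = ones X k + ones Y k"
  by (induction k) (simp_all add: join_def)

lemma b_spec_discrepancy_halving:
  assumes "b_spec f" "0 \<le> r" "r \<le> 1"
  obtains s where "0 \<le> s" "s \<le> 1"
    "\<And>k. real (ones (f r) (2*k)) - r * (2*k) = real (ones (f s) k) - s * k"
proof -
  consider "r = 0" | "r = 1" | "0 < r" "r \<le> 1/2" | "1/2 < r" "r < 1"
    using assms by linarith
  then show ?thesis
  proof cases
    case 3
    with assms have "f r = join (\<lambda>_. False) (f (2*r))" by (simp add: b_specD)
    with 3 show ?thesis by (intro that[of "2*r"]) (simp_all add: ones_join ones_const)
  next
    case 4
    with assms have "f r = join (f (2*r - 1)) (\<lambda>_. True)" by (simp add: b_specD)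
    then have "ones (f r) (2*k) = ones (f (2*r - 1)) k + k" for k
      by (simp add: ones_join ones_const)
    with 4 show ?thesis
      by (intro that[of "2*r - 1"]) (simp_all add: algebra_simps)
  qed (use assms in \<open>auto simp: b_specD ones_const intro: that\<close>)
qed

lemma two_sqrt_add_one_le: "2 * sqrt (real k) + 1 \<le> 2 * sqrt (2 * real k + 1)"
proof -
  have "2 * sqrt k \<le> k + 1"
    using power2_diff[of "sqrt k" 1] zero_le_power2[of "sqrt k - 1"] by simp
  then have "(sqrt k + 1/2)\<^sup>2 \<le> 2 * real k + 1"
    by (simp add: power2_eq_square algebra_simps)
  then have "sqrt k + 1/2 \<le> sqrt (2 * real k + 1)"
    by (rule real_le_rsqrt)
  then show ?thesis by simp
qed

lemma b_spec_discrepancy_bound: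
  assumes f: "b_spec f"
  shows "0 \<le> r \<Longrightarrow> r \<le> 1 \<Longrightarrow> \<bar>real (ones (f r) n) - r * n\<bar> \<le> 2 * sqrt n"
proof (induction n arbitrary: r rule: less_induct)
  case (less n)
  show ?case
  proof (cases "n = 0")
    case False
    obtain s where s: "0 \<le> s" "s \<le> 1"
      "\<And>k. real (ones (f r) (2*k)) - r * (2*k) = real (ones (f s) k) - s * k"
      using b_spec_discrepancy_halving[OF f less.prems] by blast
    obtain k where k: "n = 2*k \<or> n = Suc (2*k)"
      by (metis oddE evenE Suc_eq_plus1)
    with False have "k < n" by auto
    from \<open>k < n\<close> s(1,2) have IH: "\<bar>real (ones (f s) k) - s * k\<bar> \<le> 2 * sqrt k"
      by (rule less.IH)
    from k show ?thesis
    proof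
      assume n: "n = 2*k"
      then have "real (ones (f r) n) - r * n = real (ones (f s) k) - s * k"
        using s(3)[of k] by simp
      moreover have "sqrt k \<le> sqrt n"
        using n by simp
      ultimately show ?thesis
        using IH by linarith
    next
      assume n: "n = Suc (2*k)"
      then have "real (ones (f r) n) - r * n
          = (real (ones (f s) k) - s * k) + (of_bool (f r (2*k)) - r)"
        using s(3)[of k] by (simp add: algebra_simps)
      moreover have "\<bar>of_bool (f r (2*k)) - r\<bar> \<le> 1"
        using less.prems by simp
      moreover have "2 * sqrt k + 1 \<le> 2 * sqrt n"
        using two_sqrt_add_one_le[of k] n by (simp add: add.commute)
      ultimately show ?thesis
        using IH by linarith
    qed
  qed simp
qed

lemma LIMSEQ_divide_of_sqrt_bound:
  fixes a :: "nat \<Rightarrow> real" and r c :: real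
  assumes "\<And>n. \<bar>a n - r * n\<bar> \<le> c * sqrt n"
  shows "(\<lambda>n. a n / n) \<longlonglongrightarrow> r"
proof -
  have "(\<lambda>n. c / sqrt (real n)) \<longlonglongrightarrow> 0"
    by real_asymp
  moreover have "\<forall>\<^sub>F n in sequentially. norm (a n / n - r) \<le> norm (c / sqrt n) * 1"
    using eventually_gt_at_top[of 0]
  proof eventually_elim
    case (elim n)
    then have "norm (a n / n - r) = \<bar>a n - r * n\<bar> / n"
      by (simp add: field_simps)
    also have "\<dots> \<le> c * (sqrt n / n)"
      using assms by (simp add: divide_right_mono)
    also have "\<dots> = c / sqrt n"
      unfolding sqrt_divide_self_eq[OF of_nat_0_le_iff] by (simp add: divide_inverse)
    also have "\<dots> \<le> norm (c / sqrt n)"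
      unfolding real_norm_def by (rule abs_ge_self)
    finally show ?case by simp
  qed
  ultimately have "(\<lambda>n. a n / n - r) \<longlonglongrightarrow> 0"
    by (rule tendsto_0_le)
  then show ?thesis
    by (simp add: LIM_zero_iff)
qed

theorem lemma2p6:
  fixes r :: real
  assumes "0 \<le> r" and "r \<le> 1"
  shows "(\<lambda>n. real (card {m. m < n \<and> b r m}) / real n) \<longlonglongrightarrow> r"
proof -
  have "\<bar>real (ones (b r) n) - r * n\<bar> \<le> 2 * sqrt n" for n
    using b_spec_discrepancy_bound[OF b_spec_b_rec assms] b_eq_b_rec[OF assms] by simp
  then show ?thesis
    unfolding ones_def by (rule LIMSEQ_divide_of_sqrt_bound)
qed

end
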